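(* Let $n\ge2$ and $\sigma>0$. Write eigenvectors of $\mathbf A_\sigma^{-1}\mathbf B$ as $\mathbf p=(p_1,\dots,p_n)$, normalized with $\|\mathbf p\|=1$. Then the following hold. (i) The matrix $\mathbf A_\sigma^{-1}\mathbf B$ has $n-1$ linearly independent eigenvectors associated with positive eigenvalues. (ii) Exactly $\lfloor n/2\rfloor$ of these eigenvectors satisfy $p_l=p_{n-l}$ for $l=1,\dots,n-1$ and $p_n\neq0$. (iii) The remaining $\lfloor (n-1)/2\rfloor$ of these eigenvectors have entries $p_l=b\sin(l\theta_j)$ for $l=1,\dots,n$. Here $\theta_j=2\pi m_j/n$ for some $m_j\in\mathbb Z$, and $b\in\mathbb R\setminus\{0\}$ is a normalizing constant. In particular these eigenvectors satisfy $p_l=-p_{n-l}$ for $l=1,\dots,n-1$ and $p_n=0$, and they do not depend on $\sigma$. (iv) The eigenvector $\mathbf p_n$ associated with the unique negative eigenvalue satisfies $p_{l}=p_{n-l}$ for $l=1,\dots,n-1$ and $p_n\neq 0$.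
   Context: Let $\mathbf L\in\mathbb R^{n\times n}$ be the periodic discrete one-dimensional Laplacian, i.e. $(\mathbf L\mathbf x)_i=x_{i-1}-2x_i+x_{i+1}$ with indices taken modulo $n$. For $\sigma\ge 0$ set $\mathbf A_\sigma=\mathbf I-\sigma\mathbf L$, which is symmetric positive definite. Let $\mathbf B=\mathrm{diag}(1,\dots,1,-1)\in\mathbb R^{n\times n}$. It is known that $\mathbf A_\sigma^{-1}\mathbf B$ is diagonalizable with real eigenvalues, exactly one of which is negative and $n-1$ of which are positive. *)

theory Defs
  imports "Jordan_Normal_Form.Gauss_Jordan_Elimination" "Jordan_Normal_Form.Char_Poly"
begin

text \<open>Periodic discrete 1D Laplacian (0-based indices mod n):
  (L x)_i = x_(i-1) - 2 x_i + x_(i+1).  Entries are added, so for n = 2 the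
  off-diagonal entry is 2, as the formula demands.\<close>
definition lap :: "nat \<Rightarrow> real mat" where
  "lap n = mat n n (\<lambda>(i,j).
      (if j = (i + 1) mod n then 1 else 0) + (if j = (i + n - 1) mod n then 1 else 0)
      - (if i = j then 2 else 0))"

definition Amat :: "nat \<Rightarrow> real \<Rightarrow> real mat" where
  "Amat n \<sigma> = 1\<^sub>m n - \<sigma> \<cdot>\<^sub>m lap n"

definition Bmat :: "nat \<Rightarrow> real mat" where
  "Bmat n = mat n n (\<lambda>(i,j). if i = j then (if i = n - 1 then -1 else 1) else 0)"

definition Mmat :: "nat \<Rightarrow> real \<Rightarrow> real mat" where
  "Mmat n \<sigma> = the (mat_inverse (Amat n \<sigma>)) * Bmat n"

text \<open>1-based component access: pc p l = p_l for l in 1..n.\<close>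
definition pc :: "real vec \<Rightarrow> nat \<Rightarrow> real" where
  "pc p l = p $ (l - 1)"

definition vnorm :: "real vec \<Rightarrow> real" where
  "vnorm p = sqrt (\<Sum>i<dim_vec p. (p $ i)^2)"

definition sym_vec :: "nat \<Rightarrow> real vec \<Rightarrow> bool" where
  "sym_vec n p = (\<forall>l\<in>{1..n-1}. pc p l = pc p (n - l))"

definition antisym_vec :: "nat \<Rightarrow> real vec \<Rightarrow> bool" where
  "antisym_vec n p = (\<forall>l\<in>{1..n-1}. pc p l = - pc p (n - l))"

definition lin_indep_vecs :: "nat \<Rightarrow> real vec list \<Rightarrow> bool" where
  "lin_indep_vecs n ps = (\<forall>c :: nat \<Rightarrow> real.
      (\<forall>i<n. (\<Sum>j<length ps. c j * (ps ! j) $ i) = 0) \<longrightarrow> (\<forall>j<length ps. c j = 0))"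

end

theory Submission
  imports Defs
begin

text \<open>The eigenproblem for \<open>A\<^sub>\<sigma>\<^sup>-\<^sup>1 B\<close> is the pencil \<open>B p = k A\<^sub>\<sigma> p\<close> with \<open>A\<^sub>\<sigma>\<close> symmetric positive
  definite and \<open>B\<close> symmetric, so eigenvectors for distinct eigenvalues are \<open>A\<^sub>\<sigma>\<close>-orthogonal and
  hence independent, and \<open>p = k A\<^sub>\<sigma> p\<close> with \<open>k < 0\<close> forces \<open>p = 0\<close>.

  \<open>B\<close> only flips the sign of \<open>p\<^sub>n\<close>, so the reflection \<open>l \<mapsto> n - l\<close> (fixing \<open>n\<close>) commutes with
  \<open>A\<^sub>\<sigma>\<close> and \<open>B\<close>. For \<open>k < 0\<close> the antisymmetric part \<open>g\<close> of \<open>p\<close> is again an eigenvector and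
  vanishes at \<open>n\<close>, so \<open>g = B g = k A\<^sub>\<sigma> g\<close> and \<open>g = 0\<close>; likewise \<open>p\<^sub>n = 0\<close> would give \<open>p = 0\<close>.

  The positive eigenvectors are explicit. The sine modes \<open>sin (l \<theta>)\<close>, \<open>\<theta> = 2\<pi>m/n\<close>, \<open>0 < 2m < n\<close>,
  vanish at \<open>n\<close> and are eigenvectors of \<open>A\<^sub>\<sigma>\<close> for every \<open>\<sigma>\<close>. The cosine modes
  \<open>cos ((l - n/2) \<phi>)\<close> are symmetric and satisfy the pencil equation except at \<open>l = n\<close>, where it
  becomes a secular equation in \<open>\<phi>\<close>; that equation changes sign between consecutive grid points
  \<open>2\<pi>(t-1)/n\<close>, \<open>2\<pi>t/n\<close>, giving one root per cell for \<open>2t \<le> n\<close>. All these frequencies are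
  distinct in \<open>(0, \<pi>)\<close>, and the eigenvalue \<open>1 / (1 + 2\<sigma> - 2\<sigma> cos x)\<close> is injective there.\<close>

definition cyc_succ :: "nat \<Rightarrow> nat \<Rightarrow> nat" where
  "cyc_succ n i = (if i = n - 1 then 0 else i + 1)"

definition cyc_pred :: "nat \<Rightarrow> nat \<Rightarrow> nat" where
  "cyc_pred n i = (if i = 0 then n - 1 else i - 1)"

lemma cyc_succ_eq_mod: "i < n \<Longrightarrow> (i + 1) mod n = cyc_succ n i"
  unfolding cyc_succ_def by (cases "i = n - 1") auto

lemma cyc_pred_eq_mod:
  assumes "i < n"
  shows "(i + n - 1) mod n = cyc_pred n i"
proof (cases "i = 0")
  case False
  then have "i + n - 1 = (i - 1) + n" by simp
  then have "(i + n - 1) mod n = (i - 1) mod n" by (simp only: mod_add_self2)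
  then show ?thesis using False assms by (simp add: cyc_pred_def)
qed (use assms in \<open>simp add: cyc_pred_def\<close>)

lemma cyc_succ_less: "i < n \<Longrightarrow> cyc_succ n i < n"
  and cyc_pred_less: "i < n \<Longrightarrow> cyc_pred n i < n"
  by (auto simp: cyc_succ_def cyc_pred_def)

lemma cyc_pred_succ: "i < n \<Longrightarrow> cyc_pred n (cyc_succ n i) = i"
  by (auto simp: cyc_succ_def cyc_pred_def)

lemma sum_cyc_succ: "(\<Sum>i<n. h (cyc_succ n i)) = (\<Sum>i<n. h i)"
  by (rule sum.reindex_bij_witness[where i="cyc_pred n" and j="cyc_succ n"])
    (auto simp: cyc_succ_def cyc_pred_def)

definition A_fun :: "nat \<Rightarrow> real \<Rightarrow> (nat \<Rightarrow> real) \<Rightarrow> nat \<Rightarrow> real" where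
  "A_fun n \<sigma> f i = f i - \<sigma> * (f (cyc_pred n i) - 2 * f i + f (cyc_succ n i))"

definition B_fun :: "nat \<Rightarrow> (nat \<Rightarrow> real) \<Rightarrow> nat \<Rightarrow> real" where
  "B_fun n f i = (if i = n - 1 then - f i else f i)"

definition inner_fun :: "nat \<Rightarrow> (nat \<Rightarrow> real) \<Rightarrow> (nat \<Rightarrow> real) \<Rightarrow> real" where
  "inner_fun n f g = (\<Sum>i<n. f i * g i)"

lemma Amat_carrier: "Amat n \<sigma> \<in> carrier_mat n n"
  unfolding Amat_def lap_def by (intro minus_carrier_mat) auto

lemma Bmat_carrier: "Bmat n \<in> carrier_mat n n"
  by (simp add: Bmat_def)

lemma Amat_mult_vec:
  assumes p: "p \<in> carrier_vec n" and i: "i < n"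
  shows "(Amat n \<sigma> *\<^sub>v p) $ i = A_fun n \<sigma> (($) p) i"
proof -
  have "(Amat n \<sigma> *\<^sub>v p) $ i = (\<Sum>j<n. Amat n \<sigma> $$ (i, j) * p $ j)"
    using p i Amat_carrier[of n \<sigma>] by (simp add: scalar_prod_def lessThan_atLeast0)
  also have "\<dots> = (\<Sum>j<n. (if j = i then p $ j else 0) - \<sigma> * ((if j = cyc_succ n i then p $ j else 0)
      + (if j = cyc_pred n i then p $ j else 0) - (if j = i then 2 * p $ j else 0)))"
    using cyc_succ_eq_mod[OF i] cyc_pred_eq_mod[OF i]
    by (intro sum.cong) (auto simp: Amat_def lap_def i algebra_simps)
  also have "\<dots> = A_fun n \<sigma> (($) p) i"
    using i cyc_succ_less[OF i] cyc_pred_less[OF i]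
    by (simp add: A_fun_def sum_subtractf sum.distrib sum_distrib_left[symmetric] algebra_simps)
  finally show ?thesis .
qed

lemma Bmat_mult_vec:
  assumes p: "p \<in> carrier_vec n" and i: "i < n"
  shows "(Bmat n *\<^sub>v p) $ i = B_fun n (($) p) i"
proof -
  have "(Bmat n *\<^sub>v p) $ i = (\<Sum>j<n. Bmat n $$ (i, j) * p $ j)"
    using p i Bmat_carrier[of n] by (simp add: scalar_prod_def lessThan_atLeast0)
  also have "\<dots> = (\<Sum>j<n. if j = i then B_fun n (($) p) i else 0)"
    by (intro sum.cong) (auto simp: Bmat_def B_fun_def i)
  finally show ?thesis using i by simp
qed

lemma inner_fun_A_fun_expand:
  "inner_fun n (A_fun n \<sigma> f) g = (1 + 2 * \<sigma>) * inner_fun n f g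
     - \<sigma> * (\<Sum>i<n. f (cyc_pred n i) * g i) - \<sigma> * (\<Sum>i<n. f (cyc_succ n i) * g i)"
proof -
  have "inner_fun n (A_fun n \<sigma> f) g = (\<Sum>i<n. (1 + 2 * \<sigma>) * (f i * g i)
      - \<sigma> * (f (cyc_pred n i) * g i) - \<sigma> * (f (cyc_succ n i) * g i))"
    unfolding inner_fun_def A_fun_def by (intro sum.cong) (auto simp: algebra_simps)
  then show ?thesis by (simp add: sum_subtractf sum_distrib_left inner_fun_def)
qed

lemma sum_cyc_pred_mult: "(\<Sum>i<n. f (cyc_pred n i) * g i) = (\<Sum>i<n. f i * g (cyc_succ n i))"
proof -
  have "(\<Sum>i<n. f (cyc_pred n i) * g i) = (\<Sum>i<n. f (cyc_pred n (cyc_succ n i)) * g (cyc_succ n i))"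
    by (rule sum_cyc_succ[symmetric])
  also have "\<dots> = (\<Sum>i<n. f i * g (cyc_succ n i))"
    by (intro sum.cong) (auto simp: cyc_pred_succ)
  finally show ?thesis .
qed

lemma inner_fun_commute: "inner_fun n f g = inner_fun n g f"
  unfolding inner_fun_def by (simp add: mult.commute)

lemma inner_fun_A_fun_sym: "inner_fun n (A_fun n \<sigma> f) g = inner_fun n f (A_fun n \<sigma> g)"
proof -
  have "inner_fun n (A_fun n \<sigma> f) g = inner_fun n (A_fun n \<sigma> g) f"
    unfolding inner_fun_A_fun_expand sum_cyc_pred_mult by (simp add: mult.commute inner_fun_commute)
  then show ?thesis by (simp add: inner_fun_commute[of n f])
qed

lemma inner_fun_A_fun_self:
  "inner_fun n f (A_fun n \<sigma> f) = inner_fun n f f + \<sigma> * (\<Sum>i<n. (f (cyc_succ n i) - f i)^2)"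
proof -
  have "(\<Sum>i<n. (f (cyc_succ n i) - f i)^2)
      = (\<Sum>i<n. f (cyc_succ n i)^2) - 2 * (\<Sum>i<n. f i * f (cyc_succ n i)) + (\<Sum>i<n. f i^2)"
    by (simp add: power2_diff sum_subtractf sum.distrib sum_distrib_left mult_ac)
  also have "\<dots> = 2 * inner_fun n f f - 2 * (\<Sum>i<n. f i * f (cyc_succ n i))"
    unfolding sum_cyc_succ[of "\<lambda>i. f i^2"] inner_fun_def by (simp add: power2_eq_square)
  finally have energy: "(\<Sum>i<n. (f (cyc_succ n i) - f i)^2)
      = 2 * inner_fun n f f - 2 * (\<Sum>i<n. f i * f (cyc_succ n i))" .
  show ?thesis
    unfolding inner_fun_commute[of n f "A_fun n \<sigma> f"] inner_fun_A_fun_expand sum_cyc_pred_mult energy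
    by (simp add: mult.commute algebra_simps)
qed

lemma inner_fun_self_pos: "i < n \<Longrightarrow> f i \<noteq> 0 \<Longrightarrow> inner_fun n f f > 0"
  unfolding inner_fun_def by (intro sum_pos2[of _ i]) (auto simp: zero_less_mult_iff linorder_neq_iff)

lemma inner_fun_A_fun_self_pos:
  assumes "\<sigma> \<ge> 0" "i < n" "f i \<noteq> 0"
  shows "inner_fun n f (A_fun n \<sigma> f) > 0"
proof -
  have "0 \<le> \<sigma> * (\<Sum>i<n. (f (cyc_succ n i) - f i)^2)"
    using assms(1) by (intro mult_nonneg_nonneg sum_nonneg) auto
  then show ?thesis
    unfolding inner_fun_A_fun_self using inner_fun_self_pos[of i n f] assms by linarith
qed

lemma Amat_mult_vec_eq_zero:
  assumes "\<sigma> \<ge> 0" and v: "v \<in> carrier_vec n" and "Amat n \<sigma> *\<^sub>v v = 0\<^sub>v n"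
  shows "v = 0\<^sub>v n"
proof (rule ccontr)
  assume "v \<noteq> 0\<^sub>v n"
  then obtain i where i: "i < n" "v $ i \<noteq> 0" using v by (metis eq_vecI carrier_vecD index_zero_vec)
  have "\<forall>j<n. A_fun n \<sigma> (($) v) j = 0" using Amat_mult_vec[OF v] assms(3) by (metis index_zero_vec(1))
  then have "inner_fun n (($) v) (A_fun n \<sigma> (($) v)) = 0" unfolding inner_fun_def by simp
  with inner_fun_A_fun_self_pos[OF assms(1) i(1), of "($) v"] i(2) show False by simp
qed

lemma Amat_inverse:
  assumes "\<sigma> \<ge> 0"
  obtains Ai where "Ai \<in> carrier_mat n n" "Amat n \<sigma> * Ai = 1\<^sub>m n" "Ai * Amat n \<sigma> = 1\<^sub>m n"
    "mat_inverse (Amat n \<sigma>) = Some Ai"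
proof -
  have "det (Amat n \<sigma>) \<noteq> 0"
    using det_0_iff_vec_prod_zero[OF Amat_carrier] Amat_mult_vec_eq_zero[OF assms] by blast
  from det_non_zero_imp_unit[OF Amat_carrier this]
  have "Amat n \<sigma> \<in> Units (ring_mat TYPE(real) n n)" .
  then obtain Ai where Ai: "mat_inverse (Amat n \<sigma>) = Some Ai"
    using mat_inverse(1)[OF Amat_carrier[of n \<sigma>], of n] by fastforce
  from mat_inverse(2)[OF Amat_carrier Ai] Ai show ?thesis using that by blast
qed

lemma Mmat_mult_vec_eq_iff:
  assumes "\<sigma> \<ge> 0" and p: "p \<in> carrier_vec n"
  shows "Mmat n \<sigma> *\<^sub>v p = k \<cdot>\<^sub>v p \<longleftrightarrow> Bmat n *\<^sub>v p = k \<cdot>\<^sub>v (Amat n \<sigma> *\<^sub>v p)"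
proof -
  obtain Ai where Ai: "Ai \<in> carrier_mat n n" "Amat n \<sigma> * Ai = 1\<^sub>m n" "Ai * Amat n \<sigma> = 1\<^sub>m n"
    and M: "Mmat n \<sigma> = Ai * Bmat n"
    using Amat_inverse[OF assms(1)] unfolding Mmat_def by (metis option.sel)
  have A: "Amat n \<sigma> \<in> carrier_mat n n" and Bp: "Bmat n *\<^sub>v p \<in> carrier_vec n"
    using Amat_carrier mult_mat_vec_carrier[OF Bmat_carrier p] by auto
  have Mp: "Mmat n \<sigma> *\<^sub>v p = Ai *\<^sub>v (Bmat n *\<^sub>v p)"
    unfolding M using Ai p Bmat_carrier by (simp add: assoc_mult_mat_vec[of _ n n _ n])
  have left_inv: "Ai *\<^sub>v (Amat n \<sigma> *\<^sub>v v) = v" and right_inv: "Amat n \<sigma> *\<^sub>v (Ai *\<^sub>v v) = v"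
    if "v \<in> carrier_vec n" for v
    using that Ai A by (simp_all add: assoc_mult_mat_vec[symmetric, of _ n n _ n])
  show ?thesis
  proof
    assume "Mmat n \<sigma> *\<^sub>v p = k \<cdot>\<^sub>v p"
    then have "Amat n \<sigma> *\<^sub>v (Ai *\<^sub>v (Bmat n *\<^sub>v p)) = Amat n \<sigma> *\<^sub>v (k \<cdot>\<^sub>v p)" by (simp add: Mp)
    then show "Bmat n *\<^sub>v p = k \<cdot>\<^sub>v (Amat n \<sigma> *\<^sub>v p)"
      using right_inv[OF Bp] A p by (simp add: mult_mat_vec)
  next
    assume "Bmat n *\<^sub>v p = k \<cdot>\<^sub>v (Amat n \<sigma> *\<^sub>v p)"
    then show "Mmat n \<sigma> *\<^sub>v p = k \<cdot>\<^sub>v p"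
      unfolding Mp using left_inv[OF p] Ai A p by (simp add: mult_mat_vec)
  qed
qed

lemma eigenvector_Mmat_iff:
  assumes "\<sigma> \<ge> 0"
  shows "eigenvector (Mmat n \<sigma>) p k \<longleftrightarrow> p \<in> carrier_vec n \<and> p \<noteq> 0\<^sub>v n \<and>
     (\<forall>i<n. B_fun n (($) p) i = k * A_fun n \<sigma> (($) p) i)"
proof -
  have Mc: "Mmat n \<sigma> \<in> carrier_mat n n"
    using Amat_inverse[OF assms, of n] Bmat_carrier unfolding Mmat_def by (metis mult_carrier_mat option.sel)
  have "Bmat n *\<^sub>v p = k \<cdot>\<^sub>v (Amat n \<sigma> *\<^sub>v p) \<longleftrightarrow>
      (\<forall>i<n. B_fun n (($) p) i = k * A_fun n \<sigma> (($) p) i)" if p: "p \<in> carrier_vec n"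
  proof -
    have "Bmat n *\<^sub>v p = k \<cdot>\<^sub>v (Amat n \<sigma> *\<^sub>v p) \<longleftrightarrow>
        (\<forall>i<n. (Bmat n *\<^sub>v p) $ i = k * (Amat n \<sigma> *\<^sub>v p) $ i)"
      using Amat_carrier[of n \<sigma>] Bmat_carrier[of n] by (auto simp: vec_eq_iff simp del: index_mult_mat_vec)
    then show ?thesis using Amat_mult_vec[OF p] Bmat_mult_vec[OF p] by (simp del: index_mult_mat_vec)
  qed
  then show ?thesis
    unfolding eigenvector_def using Mc Mmat_mult_vec_eq_iff[OF assms] by auto
qed

lemma eigenvector_Mmat_vec:
  assumes "\<sigma> \<ge> 0" "i < n" "f i \<noteq> 0" and eq: "\<And>i. i < n \<Longrightarrow> B_fun n f i = k * A_fun n \<sigma> f i"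
  shows "eigenvector (Mmat n \<sigma>) (vec n f) k"
proof -
  have "vec n f \<noteq> 0\<^sub>v n" using assms(2,3) by (metis index_vec index_zero_vec(1))
  moreover have "A_fun n \<sigma> (($) (vec n f)) i = A_fun n \<sigma> f i" "B_fun n (($) (vec n f)) i = B_fun n f i"
    if "i < n" for i
    using that cyc_succ_less[OF that] cyc_pred_less[OF that] by (simp_all add: A_fun_def B_fun_def)
  ultimately show ?thesis unfolding eigenvector_Mmat_iff[OF assms(1)] using eq by simp
qed

lemma inner_fun_A_fun_orthogonal:
  assumes f: "\<And>i. i < n \<Longrightarrow> B_fun n f i = k * A_fun n \<sigma> f i"
    and g: "\<And>i. i < n \<Longrightarrow> B_fun n g i = l * A_fun n \<sigma> g i" and "k \<noteq> l"
  shows "inner_fun n (A_fun n \<sigma> f) g = 0"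
proof -
  have "k * inner_fun n (A_fun n \<sigma> f) g = inner_fun n (B_fun n f) g"
    unfolding inner_fun_def sum_distrib_left using f by (intro sum.cong) auto
  also have "\<dots> = inner_fun n f (B_fun n g)"
    unfolding inner_fun_def B_fun_def by (intro sum.cong) auto
  also have "\<dots> = l * inner_fun n f (A_fun n \<sigma> g)"
    unfolding inner_fun_def sum_distrib_left using g by (intro sum.cong) auto
  finally show ?thesis using \<open>k \<noteq> l\<close> by (simp add: inner_fun_A_fun_sym)
qed

lemma lin_indep_vecs_eigenvectors:
  assumes \<sigma>: "\<sigma> \<ge> 0" and eig: "list_all2 (eigenvector (Mmat n \<sigma>)) ps ks" and "distinct ks"
  shows "lin_indep_vecs n ps"
  unfolding lin_indep_vecs_def
proof (intro allI impI)
  fix c :: "nat \<Rightarrow> real" and t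
  assume comb: "\<forall>i<n. (\<Sum>j<length ps. c j * ps ! j $ i) = 0" and t: "t < length ps"
  define P where "P j = ($) (ps ! j)" for j
  have len: "length ks = length ps" using eig by (simp add: list_all2_lengthD)
  have eq: "B_fun n (P j) i = ks ! j * A_fun n \<sigma> (P j) i" if "j < length ps" "i < n" for i j
    using eig that unfolding P_def list_all2_conv_all_nth eigenvector_Mmat_iff[OF \<sigma>] by auto
  have orth: "inner_fun n (A_fun n \<sigma> (P t)) (P j) = 0" if "j < length ps" "j \<noteq> t" for j
    using inner_fun_A_fun_orthogonal[OF eq[OF t] eq[OF that(1)]] nth_eq_iff_index_eq[OF \<open>distinct ks\<close>]
      that t len by auto
  have "0 = (\<Sum>i<n. A_fun n \<sigma> (P t) i * (\<Sum>j<length ps. c j * ps ! j $ i))"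
    using comb by simp
  also have "\<dots> = (\<Sum>j<length ps. c j * inner_fun n (A_fun n \<sigma> (P t)) (P j))"
    unfolding inner_fun_def sum_distrib_left P_def by (subst sum.swap) (simp add: mult_ac)
  also have "\<dots> = c t * inner_fun n (A_fun n \<sigma> (P t)) (P t)"
    using t orth by (subst sum.remove[of _ t]) auto
  finally have "c t * inner_fun n (P t) (A_fun n \<sigma> (P t)) = 0"
    by (simp add: inner_fun_A_fun_sym)
  moreover obtain i where "i < n" "P t i \<noteq> 0"
    using eig t unfolding P_def list_all2_conv_all_nth eigenvector_Mmat_iff[OF \<sigma>]
    by (metis carrier_vecD eq_vecI index_zero_vec(1,2))
  ultimately show "c t = 0" using inner_fun_A_fun_self_pos[OF \<sigma>] by force
qed

lemma eq_neg_mult_A_fun_imp_zero: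
  assumes "\<sigma> \<ge> 0" "k < 0" and eq: "\<And>i. i < n \<Longrightarrow> g i = k * A_fun n \<sigma> g i"
  shows "\<And>i. i < n \<Longrightarrow> g i = 0"
proof (rule ccontr)
  fix i assume "i < n" "g i \<noteq> 0"
  have "inner_fun n g g = k * inner_fun n g (A_fun n \<sigma> g)"
    unfolding inner_fun_def sum_distrib_left using eq by (intro sum.cong) (auto simp: mult_ac)
  moreover have "inner_fun n g (A_fun n \<sigma> g) > 0"
    using inner_fun_A_fun_self_pos[OF assms(1) \<open>i < n\<close>, of g] \<open>g i \<noteq> 0\<close> by simp
  moreover have "inner_fun n g g > 0" using inner_fun_self_pos[of i n g] \<open>i < n\<close> \<open>g i \<noteq> 0\<close> by simp
  ultimately show False using mult_neg_pos[OF \<open>k < 0\<close>] by (metis less_asym)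
qed

text \<open>The reflection \<open>l \<mapsto> n - l\<close> of the 1-based indices \<open>1..n-1\<close>, fixing \<open>n\<close>, in 0-based form.\<close>

definition reflect_idx :: "nat \<Rightarrow> nat \<Rightarrow> nat" where
  "reflect_idx n i = (if i = n - 1 then n - 1 else n - 2 - i)"

lemma reflect_idx_props:
  assumes "n \<ge> 2" "i < n"
  shows "reflect_idx n i < n" "cyc_pred n (reflect_idx n i) = reflect_idx n (cyc_succ n i)"
    "cyc_succ n (reflect_idx n i) = reflect_idx n (cyc_pred n i)"
    "reflect_idx n i = n - 1 \<longleftrightarrow> i = n - 1"
  using assms by (auto simp: reflect_idx_def cyc_pred_def cyc_succ_def)

lemma negative_eigenvector_sym:
  assumes n: "n \<ge> 2" and \<sigma>: "\<sigma> \<ge> 0" and "k < 0" and eig: "eigenvector (Mmat n \<sigma>) p k"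
  shows "sym_vec n p \<and> pc p n \<noteq> 0"
proof -
  define f where "f = ($) p"
  from eig[unfolded eigenvector_Mmat_iff[OF \<sigma>]] have p: "p \<in> carrier_vec n" "p \<noteq> 0\<^sub>v n"
    and eq: "\<And>i. i < n \<Longrightarrow> B_fun n f i = k * A_fun n \<sigma> f i" unfolding f_def by auto
  define g where "g i = f i - f (reflect_idx n i)" for i
  have "g i = k * A_fun n \<sigma> g i" if i: "i < n" for i
  proof -
    note r = reflect_idx_props[OF n i]
    have "g i = B_fun n f i - B_fun n f (reflect_idx n i)"
      using r(4) by (auto simp: g_def B_fun_def reflect_idx_def)
    also have "\<dots> = k * (A_fun n \<sigma> f i - A_fun n \<sigma> f (reflect_idx n i))"
      using eq[OF i] eq[OF r(1)] by (simp add: algebra_simps)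
    also have "\<dots> = k * A_fun n \<sigma> g i"
      using r by (simp add: g_def A_fun_def algebra_simps)
    finally show ?thesis .
  qed
  then have g0: "g i = 0" if "i < n" for i using eq_neg_mult_A_fun_imp_zero[OF \<sigma> \<open>k < 0\<close>] that by blast
  have "f (l - 1) = f (n - l - 1)" if "l \<in> {1..n - 1}" for l
  proof -
    have "l - 1 < n" "reflect_idx n (l - 1) = n - l - 1" using that by (auto simp: reflect_idx_def)
    then show ?thesis using g0[of "l - 1"] by (simp add: g_def)
  qed
  then have "sym_vec n p" by (simp add: sym_vec_def pc_def f_def)
  moreover have "p $ (n - 1) \<noteq> 0"
  proof
    assume "p $ (n - 1) = 0"
    then have "f i = k * A_fun n \<sigma> f i" if "i < n" for i
      using eq[OF that] by (auto simp: B_fun_def f_def split: if_splits)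
    then have "p $ i = 0" if "i < n" for i
      using eq_neg_mult_A_fun_imp_zero[OF \<sigma> \<open>k < 0\<close>] that f_def by blast
    then show False using p by (metis eq_vecI carrier_vecD index_zero_vec)
  qed
  ultimately show ?thesis by (simp add: pc_def)
qed

definition A_symbol :: "real \<Rightarrow> real \<Rightarrow> real" where
  "A_symbol \<sigma> x = 1 + 2 * \<sigma> - 2 * \<sigma> * cos x"

definition grid_freq :: "nat \<Rightarrow> nat \<Rightarrow> real" where
  "grid_freq n m = 2 * pi * real m / real n"

definition sine_mode :: "real \<Rightarrow> nat \<Rightarrow> real" where
  "sine_mode x i = sin (real (i + 1) * x)"

definition cosine_mode :: "nat \<Rightarrow> real \<Rightarrow> nat \<Rightarrow> real" where
  "cosine_mode n x i = cos ((real (i + 1) - real n / 2) * x)"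

text \<open>The pencil equation of a cosine mode at its last index, where \<open>B\<close> flips the sign.\<close>

definition secular :: "nat \<Rightarrow> real \<Rightarrow> real \<Rightarrow> real" where
  "secular n \<sigma> x = \<sigma> * sin (real n / 2 * x) * sin x - cos (real n / 2 * x) * A_symbol \<sigma> x"

lemma A_symbol_ge_one: "\<sigma> \<ge> 0 \<Longrightarrow> A_symbol \<sigma> x \<ge> 1"
  unfolding A_symbol_def using mult_left_le[OF cos_le_one, of \<sigma> x] by simp

lemma inj_on_inverse_A_symbol:
  assumes "\<sigma> > 0"
  shows "inj_on (\<lambda>x. 1 / A_symbol \<sigma> x) {0..pi}"
proof (rule inj_onI)
  fix x y assume "x \<in> {0..pi}" "y \<in> {0..pi}" "1 / A_symbol \<sigma> x = 1 / A_symbol \<sigma> y"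
  then show "x = y" using assms cos_inj_pi by (auto simp: A_symbol_def)
qed

lemma sin_cos_grid_freq:
  assumes "n > 0"
  shows "sin (real n * grid_freq n m) = 0" "cos (real n * grid_freq n m) = 1"
proof -
  have "real n * grid_freq n m = real (2 * m) * pi" using assms by (simp add: grid_freq_def field_simps)
  then show "sin (real n * grid_freq n m) = 0" "cos (real n * grid_freq n m) = 1"
    by (simp_all only: sin_npi cos_npi) simp
qed

lemma A_fun_sine_mode:
  fixes m :: nat
  assumes "n > 0" "i < n"
  defines "x \<equiv> grid_freq n m"
  shows "A_fun n \<sigma> (sine_mode x) i = A_symbol \<sigma> x * sine_mode x i"
proof -
  note sc = sin_cos_grid_freq[OF assms(1), of m, folded x_def]
  have pred: "sine_mode x (cyc_pred n i) = sin (real (i + 1) * x - x)"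
    using assms sc by (auto simp: sine_mode_def cyc_pred_def of_nat_diff algebra_simps)
  have succ: "sine_mode x (cyc_succ n i) = sin (real (i + 1) * x + x)"
  proof (cases "i = n - 1")
    case True
    then have "real (i + 1) = real n" using assms by (simp add: of_nat_diff)
    then show ?thesis using True sc by (simp add: sine_mode_def cyc_succ_def sin_add)
  qed (simp add: sine_mode_def cyc_succ_def algebra_simps)
  show ?thesis
    unfolding A_fun_def pred succ sin_add sin_diff
    by (simp add: sine_mode_def A_symbol_def algebra_simps)
qed

lemma sine_mode_last: "n > 0 \<Longrightarrow> sine_mode (grid_freq n m) (n - 1) = 0"
  using sin_cos_grid_freq[of n m] by (simp add: sine_mode_def of_nat_diff)

lemma A_fun_cosine_mode:
  assumes n: "n \<ge> 2" and i: "i < n" and root: "secular n \<sigma> x = 0"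
  shows "A_fun n \<sigma> (cosine_mode n x) i = A_symbol \<sigma> x * B_fun n (cosine_mode n x) i"
proof (cases "i = n - 1")
  case False
  have pred: "cosine_mode n x (cyc_pred n i) = cos ((real (i + 1) - real n / 2) * x - x)"
  proof (cases "i = 0")
    case True
    then have "(real (i + 1) - real n / 2) * x - x = - ((real (n - 1 + 1) - real n / 2) * x)"
      using n by (simp add: algebra_simps)
    then show ?thesis using True by (simp only: cosine_mode_def cyc_pred_def cos_minus) simp
  qed (auto simp: cosine_mode_def cyc_pred_def of_nat_diff algebra_simps)
  have succ: "cosine_mode n x (cyc_succ n i) = cos ((real (i + 1) - real n / 2) * x + x)"
    using False by (simp add: cosine_mode_def cyc_succ_def algebra_simps)
  show ?thesis
    unfolding A_fun_def B_fun_def pred succ cos_add cos_diff using False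
    by (simp add: cosine_mode_def A_symbol_def algebra_simps)
next
  case True
  have last: "cosine_mode n x i = cos (real n / 2 * x)"
    using True n by (simp add: cosine_mode_def of_nat_diff algebra_simps)
  have "cosine_mode n x (cyc_pred n i) = cos (real n / 2 * x - x)"
    using True n by (simp add: cosine_mode_def cyc_pred_def of_nat_diff algebra_simps)
  moreover have "cosine_mode n x (cyc_succ n i) = cos (real n / 2 * x - x)"
    using True cos_minus[of "real n / 2 * x - x"] by (simp add: cosine_mode_def cyc_succ_def algebra_simps)
  ultimately show ?thesis
    unfolding A_fun_def B_fun_def last using True root
    by (simp add: secular_def cos_diff A_symbol_def algebra_simps)
qed

lemma secular_grid_freq:
  assumes "n > 0"
  shows "secular n \<sigma> (grid_freq n j) = - ((-1) ^ j * A_symbol \<sigma> (grid_freq n j))"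
proof -
  have "real n / 2 * grid_freq n j = real j * pi" using assms by (simp add: grid_freq_def field_simps)
  then show ?thesis by (simp add: secular_def sin_npi cos_npi)
qed

lemma secular_root_exists:
  assumes "n > 0" "\<sigma> \<ge> 0" "t \<ge> 1"
  shows "\<exists>x. grid_freq n (t - 1) < x \<and> x < grid_freq n t \<and> secular n \<sigma> x = 0"
proof -
  define F where "F = secular n \<sigma>"
  define a b where "a = grid_freq n (t - 1)" and "b = grid_freq n t"
  have ab: "a \<le> b" using assms by (simp add: a_def b_def grid_freq_def divide_right_mono)
  have cont: "continuous_on {a..b} F"
    unfolding F_def secular_def A_symbol_def by (intro continuous_intros)
  have sign: "(-1::real) ^ t = - ((-1) ^ (t - 1))"
    using assms(3) by (metis Suc_diff_le diff_Suc_1 mult_minus1 power_Suc)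
  have Fa: "F a = - ((-1) ^ (t - 1) * A_symbol \<sigma> a)" and Fb: "F b = (-1) ^ (t - 1) * A_symbol \<sigma> b"
    using secular_grid_freq[OF assms(1)] sign unfolding F_def a_def b_def by simp_all
  have pos: "A_symbol \<sigma> a > 0" "A_symbol \<sigma> b > 0"
    using A_symbol_ge_one[OF assms(2), of a] A_symbol_ge_one[OF assms(2), of b] by linarith+
  have "\<exists>x\<ge>a. x \<le> b \<and> F x = 0"
  proof (cases "even (t - 1)")
    case True
    then show ?thesis using IVT'[of F a 0 b, OF _ _ ab cont] pos Fa Fb by simp
  next
    case False
    then show ?thesis using IVT2'[of F b 0 a, OF _ _ ab cont] pos Fa Fb by simp
  qed
  moreover have "F a \<noteq> 0" "F b \<noteq> 0" using pos Fa Fb by simp_all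
  ultimately show ?thesis unfolding F_def a_def b_def by (metis order_le_less)
qed

definition secular_root :: "nat \<Rightarrow> real \<Rightarrow> nat \<Rightarrow> real" where
  "secular_root n \<sigma> t = (SOME x. grid_freq n (t - 1) < x \<and> x < grid_freq n t \<and> secular n \<sigma> x = 0)"

lemma secular_root:
  assumes "n > 0" "\<sigma> \<ge> 0" "t \<ge> 1"
  shows "grid_freq n (t - 1) < secular_root n \<sigma> t" "secular_root n \<sigma> t < grid_freq n t"
    "secular n \<sigma> (secular_root n \<sigma> t) = 0"
  using someI_ex[OF secular_root_exists[OF assms]] unfolding secular_root_def by auto

lemma cos_ne_zero_if_secular_root:
  assumes "\<sigma> > 0" "0 < x" "x < pi" "secular n \<sigma> x = 0"
  shows "cos (real n / 2 * x) \<noteq> 0"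
proof
  assume C: "cos (real n / 2 * x) = 0"
  then have "sin (real n / 2 * x) \<noteq> 0" using sin_cos_squared_add[of "real n / 2 * x"] by auto
  moreover have "sin x > 0" using sin_gt_zero assms(2,3) by blast
  ultimately show False using assms(1,4) C by (simp add: secular_def)
qed

definition normalized :: "nat \<Rightarrow> (nat \<Rightarrow> real) \<Rightarrow> real vec" where
  "normalized n f = vec n (\<lambda>i. f i / vnorm (vec n f))"

lemma vnorm_vec_pos: "i < n \<Longrightarrow> f i \<noteq> 0 \<Longrightarrow> vnorm (vec n f) > 0"
  unfolding vnorm_def by (auto intro!: sum_pos2[of _ i])

lemma vnorm_normalized:
  assumes "i < n" "f i \<noteq> 0"
  shows "vnorm (normalized n f) = 1"
proof -
  define S where "S = (\<Sum>i<n. (f i)^2)"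
  have "S > 0" using vnorm_vec_pos[of i n f] assms by (simp add: vnorm_def S_def)
  have "vnorm (normalized n f) = sqrt (\<Sum>i<n. (f i)^2 / S)"
    using \<open>S > 0\<close> by (simp add: normalized_def vnorm_def power_divide flip: S_def)
  also have "\<dots> = 1" using \<open>S > 0\<close> by (simp add: sum_divide_distrib[symmetric] S_def)
  finally show ?thesis .
qed

lemma pc_normalized: "l \<in> {1..n} \<Longrightarrow> pc (normalized n f) l = f (l - 1) / vnorm (vec n f)"
  by (auto simp: pc_def normalized_def)

lemma eigenvector_normalized:
  assumes "\<sigma> \<ge> 0" "i < n" "f i \<noteq> 0" "\<mu> \<noteq> 0"
    and eq: "\<And>i. i < n \<Longrightarrow> A_fun n \<sigma> f i = \<mu> * B_fun n f i"
  shows "eigenvector (Mmat n \<sigma>) (normalized n f) (1 / \<mu>)"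
proof -
  define v where "v = vnorm (vec n f)"
  have "v > 0" using vnorm_vec_pos[of i n f] assms(2,3) by (simp add: v_def)
  have "B_fun n (\<lambda>i. f i / v) j = 1 / \<mu> * A_fun n \<sigma> (\<lambda>i. f i / v) j" if "j < n" for j
  proof -
    have "A_fun n \<sigma> (\<lambda>i. f i / v) j = A_fun n \<sigma> f j / v"
      using \<open>v > 0\<close> by (simp add: A_fun_def field_simps)
    moreover have "B_fun n (\<lambda>i. f i / v) j = B_fun n f j / v" by (simp add: B_fun_def)
    ultimately show ?thesis using eq[OF that] assms(4) by simp
  qed
  moreover have "f i / v \<noteq> 0" using \<open>v > 0\<close> assms(3) by simp
  ultimately show ?thesis
    unfolding normalized_def v_def[symmetric] by (intro eigenvector_Mmat_vec[OF assms(1,2)])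
qed

lemma sine_vector:
  fixes m :: nat
  assumes "0 < m" "2 * m < n"
  defines "x \<equiv> grid_freq n m"
  defines "p \<equiv> normalized n (sine_mode x)"
  shows "vnorm p = 1" and "\<And>\<tau>. \<tau> \<ge> 0 \<Longrightarrow> eigenvector (Mmat n \<tau>) p (1 / A_symbol \<tau> x)"
    and "antisym_vec n p" and "pc p n = 0"
    and "\<exists>b :: real. b \<noteq> 0 \<and> (\<forall>l\<in>{1..n}. pc p l = b * sin (real l * x))"
proof -
  have n: "n > 0" using assms(2) by simp
  have "0 < x" "x < pi"
    using assms(1,2) n by (simp_all add: x_def grid_freq_def divide_less_eq)
  then have nz: "sine_mode x 0 \<noteq> 0" using sin_gt_zero[of x] by (simp add: sine_mode_def)
  have v: "vnorm (vec n (sine_mode x)) > 0" using vnorm_vec_pos[of 0 n "sine_mode x"] n nz by simp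
  have pc_p: "pc p l = sin (real l * x) / vnorm (vec n (sine_mode x))" if "l \<in> {1..n}" for l
    using that pc_normalized[OF that] by (simp add: p_def sine_mode_def)
  show "vnorm p = 1" unfolding p_def using vnorm_normalized[of 0 n "sine_mode x"] n nz by simp
  show "eigenvector (Mmat n \<tau>) p (1 / A_symbol \<tau> x)" if "\<tau> \<ge> 0" for \<tau>
    unfolding p_def using A_symbol_ge_one[OF that, of x] A_fun_sine_mode[OF n] sine_mode_last[OF n]
    by (intro eigenvector_normalized[of \<tau> 0 n "sine_mode x"] that n nz) (auto simp: B_fun_def x_def)
  note sc = sin_cos_grid_freq[OF n, of m, folded x_def]
  show "antisym_vec n p"
    unfolding antisym_vec_def
  proof
    fix l assume l: "l \<in> {1..n - 1}"
    then have ln: "l \<in> {1..n}" "n - l \<in> {1..n}" by auto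
    moreover have "real (n - l) * x = real n * x - real l * x"
      using ln(1) by (simp add: of_nat_diff algebra_simps)
    ultimately show "pc p l = - pc p (n - l)" using sc by (simp add: pc_p sin_diff)
  qed
  show "pc p n = 0" using pc_p[of n] n sc by simp
  show "\<exists>b :: real. b \<noteq> 0 \<and> (\<forall>l\<in>{1..n}. pc p l = b * sin (real l * x))"
    using v pc_p by (intro exI[of _ "1 / vnorm (vec n (sine_mode x))"]) simp
qed

lemma cosine_vector:
  assumes n: "n \<ge> 2" and "\<sigma> > 0" "0 < x" "x < pi" and root: "secular n \<sigma> x = 0"
  defines "p \<equiv> normalized n (cosine_mode n x)"
  shows "vnorm p = 1" and "eigenvector (Mmat n \<sigma>) p (1 / A_symbol \<sigma> x)"
    and "sym_vec n p" and "pc p n \<noteq> 0"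
proof -
  have last: "n - 1 < n" "cosine_mode n x (n - 1) = cos (real n / 2 * x)"
    using n by (simp_all add: cosine_mode_def of_nat_diff algebra_simps)
  have nz: "cosine_mode n x (n - 1) \<noteq> 0"
    unfolding last(2) using cos_ne_zero_if_secular_root assms(2-5) by blast
  have pc_p: "pc p l = cos ((real l - real n / 2) * x) / vnorm (vec n (cosine_mode n x))"
    if "l \<in> {1..n}" for l
    using that pc_normalized[OF that] by (simp add: p_def cosine_mode_def)
  show "vnorm p = 1" unfolding p_def using vnorm_normalized[of "n - 1" n "cosine_mode n x"] last(1) nz by simp
  show "eigenvector (Mmat n \<sigma>) p (1 / A_symbol \<sigma> x)"
    unfolding p_def using A_symbol_ge_one[of \<sigma> x] A_fun_cosine_mode[OF n _ root] assms(2)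
    by (intro eigenvector_normalized[of \<sigma> "n - 1" n "cosine_mode n x"] last(1) nz) auto
  show "sym_vec n p"
    unfolding sym_vec_def
  proof
    fix l assume l: "l \<in> {1..n - 1}"
    then have ln: "l \<in> {1..n}" "n - l \<in> {1..n}" by auto
    moreover have "(real (n - l) - real n / 2) * x = - ((real l - real n / 2) * x)"
      using ln(1) by (simp add: of_nat_diff algebra_simps)
    ultimately show "pc p l = pc p (n - l)" by (simp add: pc_p)
  qed
  show "pc p n \<noteq> 0"
    using pc_normalized[of n n] vnorm_vec_pos[of "n - 1" n "cosine_mode n x"] last(1) nz n
    by (simp add: p_def)
qed

lemma grid_freq_less_iff: "n > 0 \<Longrightarrow> grid_freq n a < grid_freq n b \<longleftrightarrow> a < b"
  by (simp add: grid_freq_def divide_less_cancel)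

lemma grid_freq_le_pi_iff: "n > 0 \<Longrightarrow> grid_freq n m \<le> pi \<longleftrightarrow> 2 * m \<le> n"
  using of_nat_le_iff[of "2 * m" n, where 'a=real] by (simp add: grid_freq_def divide_le_eq)

definition sine_freqs :: "nat \<Rightarrow> real list" where
  "sine_freqs n = map (grid_freq n) [1..<(n - 1) div 2 + 1]"

definition cosine_freqs :: "nat \<Rightarrow> real \<Rightarrow> real list" where
  "cosine_freqs n \<sigma> = map (secular_root n \<sigma>) [1..<n div 2 + 1]"

definition sine_vectors :: "nat \<Rightarrow> real vec list" where
  "sine_vectors n = map (\<lambda>x. normalized n (sine_mode x)) (sine_freqs n)"

definition cosine_vectors :: "nat \<Rightarrow> real \<Rightarrow> real vec list" where
  "cosine_vectors n \<sigma> = map (\<lambda>x. normalized n (cosine_mode n x)) (cosine_freqs n \<sigma>)"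

lemma set_sine_freqs: "set (sine_freqs n) = grid_freq n ` {m. 0 < m \<and> 2 * m < n}"
proof -
  have "{1..<(n - 1) div 2 + 1} = {m. 0 < m \<and> 2 * m < n}" by auto
  then show ?thesis by (simp only: sine_freqs_def set_map set_upt)
qed

lemma set_cosine_freqs: "set (cosine_freqs n \<sigma>) = secular_root n \<sigma> ` {t. 1 \<le> t \<and> 2 * t \<le> n}"
proof -
  have "{1..<n div 2 + 1} = {t. 1 \<le> t \<and> 2 * t \<le> n}" by auto
  then show ?thesis by (simp only: cosine_freqs_def set_map set_upt)
qed

lemma cosine_freqs_props:
  assumes "n > 0" "\<sigma> \<ge> 0" "x \<in> set (cosine_freqs n \<sigma>)"
  shows "0 < x" "x < pi" "secular n \<sigma> x = 0"
proof -
  obtain t where t: "1 \<le> t" "2 * t \<le> n" and x: "x = secular_root n \<sigma> t"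
    using assms(3) unfolding set_cosine_freqs by blast
  note root = secular_root[OF assms(1,2) t(1)]
  have "0 \<le> grid_freq n (t - 1)" by (simp add: grid_freq_def)
  then show "0 < x" using root(1) by (simp add: x)
  show "x < pi" using root(2) grid_freq_le_pi_iff[OF assms(1), of t] t(2) by (simp add: x)
  show "secular n \<sigma> x = 0" using root(3) by (simp add: x)
qed

lemma distinct_mode_freqs:
  assumes "n > 0" "\<sigma> \<ge> 0"
  shows "distinct (sine_freqs n @ cosine_freqs n \<sigma>)"
proof -
  note root = secular_root[OF assms]
  have "strict_mono (grid_freq n)" by (rule strict_monoI) (simp add: grid_freq_less_iff[OF assms(1)])
  then have sines: "distinct (sine_freqs n)"
    by (simp add: sine_freqs_def distinct_map strict_mono_imp_inj_on)
  have "strict_mono_on {1..} (secular_root n \<sigma>)"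
  proof (rule strict_mono_onI)
    fix s t :: nat assume "s \<in> {1..}" "t \<in> {1..}" "s < t"
    then have "grid_freq n s \<le> grid_freq n (t - 1)"
      using grid_freq_less_iff[OF assms(1), of "t - 1" s] by linarith
    then show "secular_root n \<sigma> s < secular_root n \<sigma> t"
      using root(2)[of s] root(1)[of t] \<open>s \<in> {1..}\<close> \<open>t \<in> {1..}\<close> by fastforce
  qed
  then have "inj_on (secular_root n \<sigma>) (set [1..<n div 2 + 1])"
    by (rule inj_on_subset[OF strict_mono_on_imp_inj_on]) auto
  then have cosines: "distinct (cosine_freqs n \<sigma>)" by (simp add: cosine_freqs_def distinct_map)
  have "grid_freq n m \<noteq> secular_root n \<sigma> t" if "t \<ge> 1" for m t
  proof
    assume eq: "grid_freq n m = secular_root n \<sigma> t"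
    have "t - 1 < m" "m < t"
      using root(1,2)[OF that, folded eq] grid_freq_less_iff[OF assms(1)] by simp_all
    then show False by simp
  qed
  then have "set (sine_freqs n) \<inter> set (cosine_freqs n \<sigma>) = {}"
    unfolding set_sine_freqs set_cosine_freqs by blast
  with sines cosines show ?thesis unfolding distinct_append by blast
qed

lemma eigenvectors_sine_cosine_vectors:
  assumes "n \<ge> 2" "\<sigma> > 0"
  shows "list_all2 (eigenvector (Mmat n \<sigma>)) (sine_vectors n @ cosine_vectors n \<sigma>)
    (map (\<lambda>x. 1 / A_symbol \<sigma> x) (sine_freqs n @ cosine_freqs n \<sigma>))"
  unfolding sine_vectors_def cosine_vectors_def map_append
proof (rule list_all2_appendI)
  show "list_all2 (eigenvector (Mmat n \<sigma>)) (map (\<lambda>x. normalized n (sine_mode x)) (sine_freqs n))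
      (map (\<lambda>x. 1 / A_symbol \<sigma> x) (sine_freqs n))"
    unfolding list_all2_map1 list_all2_map2 list_all2_same
  proof
    fix x assume "x \<in> set (sine_freqs n)"
    then obtain m where "0 < m" "2 * m < n" "x = grid_freq n m" unfolding set_sine_freqs by blast
    then show "eigenvector (Mmat n \<sigma>) (normalized n (sine_mode x)) (1 / A_symbol \<sigma> x)"
      using sine_vector(2)[of m n \<sigma>] assms(2) by simp
  qed
  show "list_all2 (eigenvector (Mmat n \<sigma>)) (map (\<lambda>x. normalized n (cosine_mode n x)) (cosine_freqs n \<sigma>))
      (map (\<lambda>x. 1 / A_symbol \<sigma> x) (cosine_freqs n \<sigma>))"
    unfolding list_all2_map1 list_all2_map2 list_all2_same
  proof
    fix x assume "x \<in> set (cosine_freqs n \<sigma>)"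
    with cosine_freqs_props[of n \<sigma> x] assms have "0 < x" "x < pi" "secular n \<sigma> x = 0" by auto
    then show "eigenvector (Mmat n \<sigma>) (normalized n (cosine_mode n x)) (1 / A_symbol \<sigma> x)"
      by (rule cosine_vector(2)[OF assms])
  qed
qed

lemma lin_indep_sine_cosine_vectors:
  assumes "n \<ge> 2" "\<sigma> > 0"
  shows "lin_indep_vecs n (sine_vectors n @ cosine_vectors n \<sigma>)"
proof (rule lin_indep_vecs_eigenvectors[OF _ eigenvectors_sine_cosine_vectors[OF assms]])
  have "set (sine_freqs n) \<subseteq> {0..pi}"
  proof
    fix x assume "x \<in> set (sine_freqs n)"
    then obtain m where "2 * m < n" "x = grid_freq n m" unfolding set_sine_freqs by blast
    then show "x \<in> {0..pi}" using grid_freq_le_pi_iff[of n m] by (simp add: grid_freq_def)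
  qed
  moreover have "set (cosine_freqs n \<sigma>) \<subseteq> {0..pi}"
    using cosine_freqs_props[of n \<sigma>] assms by fastforce
  ultimately have "inj_on (\<lambda>x. 1 / A_symbol \<sigma> x) (set (sine_freqs n @ cosine_freqs n \<sigma>))"
    by (intro inj_on_subset[OF inj_on_inverse_A_symbol[OF assms(2)]]) simp
  then show "distinct (map (\<lambda>x. 1 / A_symbol \<sigma> x) (sine_freqs n @ cosine_freqs n \<sigma>))"
    unfolding distinct_map using distinct_mode_freqs[of n \<sigma>] assms by simp
qed (use assms in simp)

lemma card_nth_append_split:
  assumes "\<forall>x\<in>set xs. \<not> P x" "\<forall>y\<in>set ys. P y"
  shows "card {j. j < length (xs @ ys) \<and> P ((xs @ ys) ! j)} = length ys"
    and "card {j. j < length (xs @ ys) \<and> \<not> P ((xs @ ys) ! j)} = length xs"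
proof -
  have key: "P ((xs @ ys) ! j) \<longleftrightarrow> length xs \<le> j" if "j < length (xs @ ys)" for j
  proof (cases "j < length xs")
    case True
    then show ?thesis using assms(1) nth_mem[OF True] by (simp add: nth_append)
  next
    case False
    then have "j - length xs < length ys" using that by simp
    then show ?thesis using assms(2) nth_mem False by (simp add: nth_append)
  qed
  have "{j. j < length (xs @ ys) \<and> P ((xs @ ys) ! j)} = {length xs..<length (xs @ ys)}"
    using key by fastforce
  moreover have "{j. j < length (xs @ ys) \<and> \<not> P ((xs @ ys) ! j)} = {..<length xs}"
    using key by fastforce
  ultimately show "card {j. j < length (xs @ ys) \<and> P ((xs @ ys) ! j)} = length ys"
    and "card {j. j < length (xs @ ys) \<and> \<not> P ((xs @ ys) ! j)} = length xs"
    by simp_all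
qed

lemma exists_pos_eigenvalue:
  assumes "\<tau> \<ge> 0" "eigenvector (Mmat n \<tau>) p (1 / A_symbol \<tau> x)"
  shows "\<exists>k>0. eigenvector (Mmat n \<tau>) p k"
proof (rule exI[of _ "1 / A_symbol \<tau> x"], rule conjI)
  show "0 < 1 / A_symbol \<tau> x" using A_symbol_ge_one[OF assms(1), of x] by simp
qed (rule assms(2))

lemma sine_vectors_props:
  assumes mem: "p \<in> set (sine_vectors n)"
  shows "vnorm p = 1" and "\<forall>\<tau>>0. \<exists>k>0. eigenvector (Mmat n \<tau>) p k"
    and "antisym_vec n p" and "pc p n = 0"
    and "\<exists>m :: int. \<exists>b :: real. b \<noteq> 0 \<and>
          (\<forall>l\<in>{1..n}. pc p l = b * sin (real l * (2 * pi * real_of_int m / real n)))"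
proof -
  obtain x where x: "x \<in> set (sine_freqs n)" and p: "p = normalized n (sine_mode x)"
    using mem unfolding sine_vectors_def by auto
  then obtain m where m: "0 < m" "2 * m < n" and x: "x = grid_freq n m"
    unfolding set_sine_freqs by blast
  have "x = 2 * pi * real_of_int (int m) / real n" by (simp add: x grid_freq_def)
  note sine = sine_vector[OF m, folded x p, unfolded this]
  show "vnorm p = 1" "antisym_vec n p" "pc p n = 0" by (fact sine(1,3,4))+
  show "\<forall>\<tau>>0. \<exists>k>0. eigenvector (Mmat n \<tau>) p k"
  proof (intro allI impI)
    fix \<tau> :: real assume "\<tau> > 0"
    then show "\<exists>k>0. eigenvector (Mmat n \<tau>) p k"
      using exists_pos_eigenvalue[OF _ sine(2)] by simp
  qed
  show "\<exists>m :: int. \<exists>b :: real. b \<noteq> 0 \<and>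
      (\<forall>l\<in>{1..n}. pc p l = b * sin (real l * (2 * pi * real_of_int m / real n)))"
    using sine(5) by (rule exI[of _ "int m"])
qed

lemma cosine_vectors_props:
  assumes "n \<ge> 2" "\<sigma> > 0" and mem: "p \<in> set (cosine_vectors n \<sigma>)"
  shows "vnorm p = 1" and "\<exists>k>0. eigenvector (Mmat n \<sigma>) p k"
    and "sym_vec n p" and "pc p n \<noteq> 0"
proof -
  obtain x where x: "x \<in> set (cosine_freqs n \<sigma>)" and p: "p = normalized n (cosine_mode n x)"
    using mem unfolding cosine_vectors_def by auto
  then have "0 < x" "x < pi" "secular n \<sigma> x = 0" using cosine_freqs_props[of n \<sigma> x] assms by auto
  note cosine = cosine_vector[OF assms(1,2) this, folded p]
  show "vnorm p = 1" "sym_vec n p" "pc p n \<noteq> 0" by (fact cosine(1,3,4))+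
  show "\<exists>k>0. eigenvector (Mmat n \<sigma>) p k"
    using exists_pos_eigenvalue[OF _ cosine(2)] assms(2) by simp
qed

lemma length_sine_vectors: "length (sine_vectors n) = (n - 1) div 2"
  and length_cosine_vectors: "length (cosine_vectors n \<sigma>) = n div 2"
  by (simp_all add: sine_vectors_def cosine_vectors_def sine_freqs_def cosine_freqs_def)

lemma nth_append_mem_left:
  assumes "\<forall>y\<in>set ys. P y" "j < length (xs @ ys)" "\<not> P ((xs @ ys) ! j)"
  shows "(xs @ ys) ! j \<in> set xs"
proof (cases "j < length xs")
  case False
  then have "(xs @ ys) ! j \<in> set ys" using assms(2) by (simp add: nth_append)
  with assms(1,3) show ?thesis by blast
qed (simp add: nth_append)

theorem lemma3p2:
  fixes n :: nat and \<sigma> :: real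
  assumes "n \<ge> 2" and "\<sigma> > 0"
  shows "\<exists>ps :: real vec list.
      length ps = n - 1 \<and>
      lin_indep_vecs n ps \<and>
      (\<forall>p\<in>set ps. vnorm p = 1 \<and> (\<exists>k>0. eigenvector (Mmat n \<sigma>) p k)) \<and>
      card {j. j < n - 1 \<and> sym_vec n (ps ! j) \<and> pc (ps ! j) n \<noteq> 0} = n div 2 \<and>
      card {j. j < n - 1 \<and> \<not> (sym_vec n (ps ! j) \<and> pc (ps ! j) n \<noteq> 0)} = (n - 1) div 2 \<and>
      (\<forall>j<n - 1. \<not> (sym_vec n (ps ! j) \<and> pc (ps ! j) n \<noteq> 0) \<longrightarrow>
          (\<exists>m :: int. \<exists>b :: real. b \<noteq> 0 \<and>
              (\<forall>l\<in>{1..n}. pc (ps ! j) l = b * sin (real l * (2 * pi * real_of_int m / real n)))) \<and>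
          antisym_vec n (ps ! j) \<and> pc (ps ! j) n = 0 \<and>
          (\<forall>\<tau>>0. \<exists>k>0. eigenvector (Mmat n \<tau>) (ps ! j) k)) \<and>
      (\<forall>p k. eigenvector (Mmat n \<sigma>) p k \<and> k < 0 \<and> vnorm p = 1 \<longrightarrow>
          sym_vec n p \<and> pc p n \<noteq> 0)"
proof -
  let ?P = "\<lambda>p. sym_vec n p \<and> pc p n \<noteq> 0"
  let ?ss = "sine_vectors n" and ?cs = "cosine_vectors n \<sigma>"
  let ?ps = "?ss @ ?cs"
  let ?Q = "\<lambda>p. (\<exists>m :: int. \<exists>b :: real. b \<noteq> 0 \<and>
      (\<forall>l\<in>{1..n}. pc p l = b * sin (real l * (2 * pi * real_of_int m / real n)))) \<and>
    antisym_vec n p \<and> pc p n = 0 \<and> (\<forall>\<tau>>0. \<exists>k>0. eigenvector (Mmat n \<tau>) p k)"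
  have split: "\<forall>p\<in>set ?ss. \<not> ?P p" "\<forall>p\<in>set ?cs. ?P p"
    using sine_vectors_props(4) cosine_vectors_props(3,4)[OF assms] by auto
  have len: "length ?ss = (n - 1) div 2" "length ?cs = n div 2" "length ?ps = n - 1"
    using assms(1) by (simp_all add: length_sine_vectors length_cosine_vectors)
  show ?thesis
  proof (intro exI[of _ ?ps] conjI)
    show "length ?ps = n - 1" by (fact len(3))
    show "lin_indep_vecs n ?ps" using lin_indep_sine_cosine_vectors[OF assms] .
    show "\<forall>p\<in>set ?ps. vnorm p = 1 \<and> (\<exists>k>0. eigenvector (Mmat n \<sigma>) p k)"
    proof
      fix p assume "p \<in> set ?ps"
      then consider "p \<in> set ?ss" | "p \<in> set ?cs" by auto
      then show "vnorm p = 1 \<and> (\<exists>k>0. eigenvector (Mmat n \<sigma>) p k)"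
        using sine_vectors_props(1,2) cosine_vectors_props(1,2)[OF assms] assms(2) by cases blast+
    qed
    show "card {j. j < n - 1 \<and> ?P (?ps ! j)} = n div 2"
      unfolding len(3)[symmetric] len(2)[symmetric] by (rule card_nth_append_split(1)[OF split])
    show "card {j. j < n - 1 \<and> \<not> ?P (?ps ! j)} = (n - 1) div 2"
      unfolding len(1)[symmetric] unfolding len(3)[symmetric] by (rule card_nth_append_split(2)[OF split])
    show "\<forall>j<n - 1. \<not> ?P (?ps ! j) \<longrightarrow> ?Q (?ps ! j)"
    proof (intro allI impI)
      fix j assume "j < n - 1" "\<not> ?P (?ps ! j)"
      then have "?ps ! j \<in> set ?ss" using nth_append_mem_left[OF split(2), of j] len(3) by simp
      then show "?Q (?ps ! j)" using sine_vectors_props(2-5) by blast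
    qed
    show "\<forall>p k. eigenvector (Mmat n \<sigma>) p k \<and> k < 0 \<and> vnorm p = 1 \<longrightarrow> ?P p"
      using negative_eigenvector_sym[OF assms(1) less_imp_le[OF assms(2)]] by blast
  qed
qed

end
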